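(* Let $n\ge1$, $\alpha,t,p\in(0,\infty)$, $r\in(1,\infty)$ and $q\in[1,\infty)$. For a measurable function $f$ on $\mathbb{R}^n$ the following are equivalent: (1) $f\in(\dot{K}E_{q,r}^{\alpha,p})_t(\mathbb{R}^n)$; (2) $f$ can be represented as $f(x)=\sum_{k\in\mathbb{Z}}\lambda_k b_k(x)$, where $(\lambda_k)_{k\in\mathbb{Z}}$ are scalars with $\sum_{k\in\mathbb{Z}}|\lambda_k|^p<\infty$ and each $b_k$ is a dyadic central $(\alpha,q,r)$-block with support contained in $B_k$.
   Context: For $x\in\mathbb{R}^n$ and $s>0$, $B(x,s)$ is the Euclidean ball of centre $x$ and radius $s$, $|E|$ is Lebesgue measure and $\mathbf{1}_E$ the indicator of $E$. For $t\in(0,\infty)$, $r\in(1,\infty)$, $q\in[1,\infty]$, the slice space $(E_r^q)_t(\mathbb{R}^n)$ is the set of measurable $f$ on $\mathbb{R}^n$ with $\|f\|_{(E_r^q)_t(\mathbb{R}^n)}:=\Big\| x\mapsto\Big(\frac{1}{|B(x,t)|}\int_{B(x,t)}|f(y)|^r\,dy\Big)^{1/r}\Big\|_{L^q(\mathbb{R}^n)}<\infty$. For $k\in\mathbb{Z}$ let $B_k=\{x:|x|\le 2^k\}$ and $S_k=B_k\setminus B_{k-1}$. For $\alpha\in\mathbb{R}$, $p\in(0,\infty)$, the homogeneous Herz-slice space $(\dot{K}E_{q,r}^{\alpha,p})_t(\mathbb{R}^n)$ is the set of measurable $f$ with $\|f\|_{(\dot{K}E_{q,r}^{\alpha,p})_t}:=\Big(\sum_{k\in\mathbb{Z}}2^{k\alpha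 p}\|f\mathbf{1}_{S_k}\|_{(E_r^q)_t(\mathbb{R}^n)}^p\Big)^{1/p}<\infty$. A function $a$ on $\mathbb{R}^n$ is a central $(\alpha,q,r)$-block if $\operatorname{supp}(a)\subset B(0,R)$ for some $R>0$ and $\|a\|_{(E_r^q)_t(\mathbb{R}^n)}\le CR^{-\alpha}$, where $C>0$ is a fixed constant (the same for all blocks considered); it is a dyadic central $(\alpha,q,r)$-block if moreover $R=2^k$ for some $k\in\mathbb{Z}$. *)

theory Defs
  imports "HOL-Analysis.Analysis"
begin

text \<open>Real power on extended nonnegative reals (for positive exponents):
  infinity stays infinity, finite values use the real powr.\<close>
definition ennpowr :: "ennreal \<Rightarrow> real \<Rightarrow> ennreal" where
  "ennpowr x a = (if x = \<infinity> then \<infinity> else ennreal (enn2real x powr a))"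

definition loc_avg :: "real \<Rightarrow> real \<Rightarrow> ('a::euclidean_space \<Rightarrow> real) \<Rightarrow> 'a \<Rightarrow> ennreal" where
  "loc_avg t r f x =
     ennpowr (ennreal (1 / measure lebesgue (ball x t)) *
              (\<integral>\<^sup>+ y. ennreal (indicator (ball x t) y * \<bar>f y\<bar> powr r) \<partial>lebesgue)) (1 / r)"

definition slice_norm :: "real \<Rightarrow> real \<Rightarrow> real \<Rightarrow> ('a::euclidean_space \<Rightarrow> real) \<Rightarrow> ennreal" where
  "slice_norm t r q f =
     ennpowr (\<integral>\<^sup>+ x. ennpowr (loc_avg t r f x) q \<partial>lebesgue) (1 / q)"

definition Bk :: "int \<Rightarrow> 'a::euclidean_space set" where
  "Bk k = {x. norm x \<le> 2 powr (real_of_int k)}"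

definition Sk :: "int \<Rightarrow> 'a::euclidean_space set" where
  "Sk k = Bk k - Bk (k - 1)"

definition herz_slice_normp ::
  "real \<Rightarrow> real \<Rightarrow> real \<Rightarrow> real \<Rightarrow> real \<Rightarrow> ('a::euclidean_space \<Rightarrow> real) \<Rightarrow> ennreal" where
  "herz_slice_normp \<alpha> p q r t f =
     (\<Sum>\<^sub>\<infinity> k::int. ennreal (2 powr (real_of_int k * \<alpha> * p)) *
        ennpowr (slice_norm t r q (\<lambda>x. f x * indicator (Sk k) x)) p)"

definition herz_slice_space ::
  "real \<Rightarrow> real \<Rightarrow> real \<Rightarrow> real \<Rightarrow> real \<Rightarrow> ('a::euclidean_space \<Rightarrow> real) set" where
  "herz_slice_space \<alpha> p q r t =
     {f. f \<in> borel_measurable lebesgue \<and> herz_slice_normp \<alpha> p q r t f < \<infinity>}"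

definition dyadic_central_block ::
  "real \<Rightarrow> real \<Rightarrow> real \<Rightarrow> real \<Rightarrow> real \<Rightarrow> int \<Rightarrow> ('a::euclidean_space \<Rightarrow> real) \<Rightarrow> bool" where
  "dyadic_central_block C \<alpha> q r t k b \<longleftrightarrow>
     b \<in> borel_measurable lebesgue \<and>
     {x. b x \<noteq> 0} \<subseteq> Bk k \<and>
     slice_norm t r q b \<le> ennreal (C * (2 powr real_of_int k) powr (- \<alpha>))"

end

theory Submission
  imports Defs
begin

text \<open>
  (1) \<open>\<Longrightarrow>\<close> (2): cut \<open>f\<close> along the dyadic annuli \<open>S_k\<close>. If \<open>\<lambda>_k \<ge> 2^(k\<alpha>) N_k / C\<close>, where
  \<open>N_k\<close> is the slice norm of \<open>f 1_(S_k)\<close>, then \<open>f 1_(S_k) / \<lambda>_k\<close> is a dyadic central block, and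
  \<open>\<Sum>_k (2^(k\<alpha>) N_k)^p\<close> is the Herz quasi-norm to the power \<open>p\<close>.

  (2) \<open>\<Longrightarrow>\<close> (1): only the blocks \<open>b_k\<close> with \<open>k \<ge> j\<close> meet \<open>S_j\<close>, so countable subadditivity of the
  slice norm (Minkowski's inequality in \<open>L^r\<close> and in \<open>L^q\<close>) gives
  \<open>2^(j\<alpha>) N_j \<le> C \<Sum>_(m\<ge>0) 2^(-m\<alpha>) |\<lambda>_(j+m)|\<close>. Convolving an \<open>\<ell>^p\<close> sequence with the summable
  kernel \<open>2^(-m\<alpha>)\<close> stays in \<open>\<ell>^p\<close>: by Minkowski's inequality in \<open>\<ell>^p\<close> for \<open>p \<ge> 1\<close>, and by
  subadditivity of \<open>x \<mapsto> x^p\<close> for \<open>p < 1\<close>.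
\<close>

lemma ennpowr_ennreal: "0 \<le> x \<Longrightarrow> ennpowr (ennreal x) a = ennreal (x powr a)"
  by (simp add: ennpowr_def)

lemma ennpowr_top [simp]: "ennpowr top a = top"
  by (simp add: ennpowr_def)

lemma ennpowr_0 [simp]: "ennpowr 0 a = 0"
  by (simp add: ennpowr_def)

lemma ennpowr_1 [simp]: "ennpowr x 1 = x"
  by (cases x) (auto simp: ennpowr_ennreal)

lemma ennpowr_less_top_iff: "a > 0 \<Longrightarrow> ennpowr x a < top \<longleftrightarrow> x < top"
  by (auto simp: ennpowr_def top.not_eq_extremum)

lemma ennpowr_mono: "a \<ge> 0 \<Longrightarrow> x \<le> y \<Longrightarrow> ennpowr x a \<le> ennpowr y a"
  by (cases x; cases y) (auto simp: ennpowr_ennreal top_unique intro!: powr_mono2)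

lemma ennpowr_powr: "a > 0 \<Longrightarrow> b > 0 \<Longrightarrow> ennpowr (ennpowr x a) b = ennpowr x (a * b)"
  by (cases x) (auto simp: ennpowr_ennreal powr_powr)

lemma ennpowr_le_iff:
  assumes "a > 0"
  shows "ennpowr x a \<le> y \<longleftrightarrow> x \<le> ennpowr y (1 / a)"
proof
  assume "ennpowr x a \<le> y"
  then have "ennpowr (ennpowr x a) (1 / a) \<le> ennpowr y (1 / a)"
    using assms by (intro ennpowr_mono) auto
  then show "x \<le> ennpowr y (1 / a)"
    using assms by (simp add: ennpowr_powr)
next
  assume "x \<le> ennpowr y (1 / a)"
  then have "ennpowr x a \<le> ennpowr (ennpowr y (1 / a)) a"
    using assms by (intro ennpowr_mono) auto
  then show "ennpowr x a \<le> y"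
    using assms by (simp add: ennpowr_powr)
qed

lemma ennpowr_mult:
  assumes "a > 0"
  shows "ennpowr (x * y) a = ennpowr x a * ennpowr y a"
  using assms
  by (cases x; cases y)
     (auto simp: ennpowr_ennreal powr_mult ennreal_mult_top ennreal_top_mult
           simp flip: ennreal_mult)

lemma ennpowr_SUP:
  assumes "a > 0"
  shows "ennpowr (SUP i\<in>I. X i) a = (SUP i\<in>I. ennpowr (X i) a)"
proof (rule antisym)
  show "ennpowr (SUP i\<in>I. X i) a \<le> (SUP i\<in>I. ennpowr (X i) a)"
    unfolding ennpowr_le_iff[OF assms]
    by (intro SUP_least) (auto simp flip: ennpowr_le_iff[OF assms] intro: SUP_upper)
  show "(SUP i\<in>I. ennpowr (X i) a) \<le> ennpowr (SUP i\<in>I. X i) a"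
    using assms by (intro SUP_least ennpowr_mono SUP_upper) auto
qed

lemma borel_measurable_ennpowr [measurable]:
  assumes [measurable]: "g \<in> borel_measurable M"
  shows "(\<lambda>x. ennpowr (g x) a) \<in> borel_measurable M"
  unfolding ennpowr_def by measurable

section \<open>Minkowski's inequality for nonnegative functions\<close>

lemma convex_on_powr_nonneg:
  assumes "s \<ge> 1"
  shows "convex_on {0..} (\<lambda>x::real. x powr s)"
proof (rule convex_on_linorderI)
  fix u x y :: real
  assume u: "0 < u" "u < 1" and xy: "x \<in> {0..}" "y \<in> {0..}" "x < y"
  show "((1 - u) *\<^sub>R x + u *\<^sub>R y) powr s \<le> (1 - u) * x powr s + u * y powr s"
  proof (cases "x = 0")
    case True
    have "(u * y) powr s = u powr s * y powr s"
      using u xy by (simp add: powr_mult)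
    also have "\<dots> \<le> u * y powr s"
      using u assms by (intro mult_right_mono powr_le_one_le) auto
    finally show ?thesis using True by simp
  next
    case False
    then show ?thesis
      using u xy by (intro convex_onD[OF powr_convex[OF assms]]) auto
  qed
qed simp

lemma powr_add_le_weighted:
  fixes x y A B s :: real
  assumes s: "s \<ge> 1" and A: "A > 0" and B: "B > 0" and "x \<ge> 0" "y \<ge> 0"
  shows "(x + y) powr s \<le> (A + B) powr (s - 1) * (A powr (1 - s) * x powr s + B powr (1 - s) * y powr s)"
proof -
  define w where "w = B / (A + B)"
  have w: "0 \<le> w" "w \<le> 1" "1 - w = A / (A + B)"
    using A B by (auto simp: w_def field_simps)
  have "((1 - w) *\<^sub>R (x / A) + w *\<^sub>R (y / B)) powr s \<le> (1 - w) * (x / A) powr s + w * (y / B) powr s"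
    using w assms by (intro convex_onD[OF convex_on_powr_nonneg[OF s]]) auto
  moreover have "(1 - w) *\<^sub>R (x / A) + w *\<^sub>R (y / B) = (x + y) / (A + B)"
    using A B by (simp add: w_def divide_simps)
  ultimately have "((x + y) / (A + B)) powr s \<le> (1 - w) * (x / A) powr s + w * (y / B) powr s"
    by simp
  then have "(A + B) powr s * ((x + y) / (A + B)) powr s
      \<le> (A + B) powr s * ((1 - w) * (x / A) powr s + w * (y / B) powr s)"
    by (rule mult_left_mono) simp
  moreover have "(A + B) powr s * ((x + y) / (A + B)) powr s = (x + y) powr s"
    using A B assms by (simp add: powr_divide)
  moreover have "(A + B) powr s * ((1 - w) * (x / A) powr s + w * (y / B) powr s)
      = (A + B) powr (s - 1) * (A powr (1 - s) * x powr s + B powr (1 - s) * y powr s)"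
  proof -
    have "P * (A / (A + B) * (X / a) + B / (A + B) * (Y / b)) = P / (A + B) * (A / a * X + B / b * Y)"
      if "a > 0" "b > 0" for P X Y a b :: real
      using A B that by (simp add: divide_simps)
    from this[of "A powr s" "B powr s" "(A + B) powr s"] show ?thesis
      unfolding w(3) using A B assms by (simp add: w_def powr_divide powr_diff)
  qed
  ultimately show ?thesis by simp
qed

lemma ennpowr_add_le_weighted:
  fixes u v :: ennreal and A B s :: real
  assumes "s \<ge> 1" "A > 0" "B > 0"
  shows "ennpowr (u + v) s \<le> ennreal ((A + B) powr (s - 1) * A powr (1 - s)) * ennpowr u s
                            + ennreal ((A + B) powr (s - 1) * B powr (1 - s)) * ennpowr v s"
proof (cases "u = top \<or> v = top")
  case True
  then show ?thesis
    using assms by (auto simp: ennreal_mult_top top_unique)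
next
  case False
  then obtain x y where "u = ennreal x" "v = ennreal y" "x \<ge> 0" "y \<ge> 0"
    by (metis ennreal_cases)
  then show ?thesis
    using powr_add_le_weighted[OF assms \<open>x \<ge> 0\<close> \<open>y \<ge> 0\<close>] assms
    by (simp add: ennpowr_ennreal algebra_simps flip: ennreal_plus ennreal_mult del: ennreal_plus)
qed

definition nn_Lp_norm :: "'a measure \<Rightarrow> real \<Rightarrow> ('a \<Rightarrow> ennreal) \<Rightarrow> ennreal" where
  "nn_Lp_norm M s g = ennpowr (\<integral>\<^sup>+ x. ennpowr (g x) s \<partial>M) (1 / s)"

lemma nn_Lp_norm_le_iff:
  "s > 0 \<Longrightarrow> nn_Lp_norm M s g \<le> y \<longleftrightarrow> (\<integral>\<^sup>+ x. ennpowr (g x) s \<partial>M) \<le> ennpowr y s"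
  unfolding nn_Lp_norm_def by (simp add: ennpowr_le_iff)

lemma nn_Lp_norm_mono:
  "s > 0 \<Longrightarrow> (\<And>x. g x \<le> h x) \<Longrightarrow> nn_Lp_norm M s g \<le> nn_Lp_norm M s h"
  unfolding nn_Lp_norm_def by (intro ennpowr_mono nn_integral_mono) auto

lemma nn_Lp_norm_cmult:
  assumes "s > 0" and [measurable]: "g \<in> borel_measurable M"
  shows "nn_Lp_norm M s (\<lambda>x. c * g x) = c * nn_Lp_norm M s g"
  using assms by (simp add: nn_Lp_norm_def ennpowr_mult nn_integral_cmult ennpowr_powr)

lemma nn_Lp_norm_add_le_of_bounds:
  fixes A B s :: real
  assumes s: "s \<ge> 1" and A: "A > 0" and B: "B > 0"
    and [measurable]: "g \<in> borel_measurable M" "h \<in> borel_measurable M"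
    and gA: "nn_Lp_norm M s g \<le> ennreal A" and hB: "nn_Lp_norm M s h \<le> ennreal B"
  shows "nn_Lp_norm M s (\<lambda>x. g x + h x) \<le> ennreal (A + B)"
proof -
  define KA where "KA = (A + B) powr (s - 1) * A powr (1 - s)"
  define KB where "KB = (A + B) powr (s - 1) * B powr (1 - s)"
  have "(\<integral>\<^sup>+ x. ennpowr (g x + h x) s \<partial>M)
      \<le> (\<integral>\<^sup>+ x. ennreal KA * ennpowr (g x) s + ennreal KB * ennpowr (h x) s \<partial>M)"
    unfolding KA_def KB_def by (intro nn_integral_mono ennpowr_add_le_weighted[OF s A B])
  also have "\<dots> = ennreal KA * (\<integral>\<^sup>+ x. ennpowr (g x) s \<partial>M) + ennreal KB * (\<integral>\<^sup>+ x. ennpowr (h x) s \<partial>M)"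
    by (simp add: nn_integral_add nn_integral_cmult)
  also have "\<dots> \<le> ennreal KA * ennreal (A powr s) + ennreal KB * ennreal (B powr s)"
    using gA hB s A B by (intro add_mono mult_left_mono) (auto simp: nn_Lp_norm_le_iff ennpowr_ennreal)
  also have "\<dots> = ennreal ((A + B) powr s)"
  proof -
    have "A powr (1 - s) * A powr s = A" "B powr (1 - s) * B powr s = B"
      using A B by (simp_all flip: powr_add)
    then have "KA * A powr s + KB * B powr s = (A + B) powr (s - 1) * (A + B)"
      by (simp add: KA_def KB_def mult.assoc distrib_left)
    also have "\<dots> = (A + B) powr s"
      using A B by (simp add: powr_diff)
    finally show ?thesis
      using A B by (simp add: KA_def KB_def flip: ennreal_plus ennreal_mult del: ennreal_plus)
  qed
  finally show ?thesis
    using A B s by (simp add: nn_Lp_norm_le_iff ennpowr_ennreal del: ennreal_plus)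
qed

lemma nn_Lp_norm_add_le:
  assumes s: "s \<ge> 1" and [measurable]: "g \<in> borel_measurable M" "h \<in> borel_measurable M"
  shows "nn_Lp_norm M s (\<lambda>x. g x + h x) \<le> nn_Lp_norm M s g + nn_Lp_norm M s h"
proof (rule ennreal_le_epsilon)
  \<comment> \<open>The slack \<open>e\<close> makes both bounds strictly positive, as \<open>nn_Lp_norm_add_le_of_bounds\<close> requires.\<close>
  fix e :: real
  assume fin: "nn_Lp_norm M s g + nn_Lp_norm M s h < top" and "e > 0"
  then obtain a b where ab: "nn_Lp_norm M s g = ennreal a" "nn_Lp_norm M s h = ennreal b" "a \<ge> 0" "b \<ge> 0"
    by (metis ennreal_cases ennreal_add_eq_top less_top)
  have "nn_Lp_norm M s (\<lambda>x. g x + h x) \<le> ennreal ((a + e / 2) + (b + e / 2))"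
    using ab \<open>e > 0\<close> by (intro nn_Lp_norm_add_le_of_bounds[OF s]) auto
  also have "\<dots> = nn_Lp_norm M s g + nn_Lp_norm M s h + ennreal e"
    using ab \<open>e > 0\<close> by (simp flip: ennreal_plus del: ennreal_plus)
  finally show "nn_Lp_norm M s (\<lambda>x. g x + h x) \<le> nn_Lp_norm M s g + nn_Lp_norm M s h + ennreal e" .
qed

lemma nn_Lp_norm_sum_le:
  fixes g :: "nat \<Rightarrow> 'a \<Rightarrow> ennreal"
  assumes "s \<ge> 1" and [measurable]: "\<And>i. g i \<in> borel_measurable M"
  shows "nn_Lp_norm M s (\<lambda>x. \<Sum>i<n. g i x) \<le> (\<Sum>i<n. nn_Lp_norm M s (g i))"
proof (induction n)
  case 0
  then show ?case using assms by (simp add: nn_Lp_norm_def)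
next
  case (Suc n)
  have "nn_Lp_norm M s (\<lambda>x. \<Sum>i<Suc n. g i x) \<le> nn_Lp_norm M s (\<lambda>x. \<Sum>i<n. g i x) + nn_Lp_norm M s (g n)"
    using nn_Lp_norm_add_le[OF assms(1), of "\<lambda>x. \<Sum>i<n. g i x" M "g n"] by simp
  then show ?case
    using Suc by (simp add: add_right_mono order_trans)
qed

lemma nn_Lp_norm_suminf_le:
  fixes g :: "nat \<Rightarrow> 'a \<Rightarrow> ennreal"
  assumes s: "s \<ge> 1" and [measurable]: "\<And>i. g i \<in> borel_measurable M"
  shows "nn_Lp_norm M s (\<lambda>x. \<Sum>i. g i x) \<le> (\<Sum>i. nn_Lp_norm M s (g i))"
proof -
  have s0: "s > 0" using s by simp
  have "(\<integral>\<^sup>+ x. ennpowr (\<Sum>i. g i x) s \<partial>M) = (\<integral>\<^sup>+ x. (SUP n. ennpowr (\<Sum>i<n. g i x) s) \<partial>M)"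
    by (simp add: suminf_eq_SUP ennpowr_SUP[OF s0])
  also have "\<dots> = (SUP n. \<integral>\<^sup>+ x. ennpowr (\<Sum>i<n. g i x) s \<partial>M)"
    using s0 by (intro nn_integral_monotone_convergence_SUP)
      (auto simp: incseq_def le_fun_def intro!: ennpowr_mono sum_mono2)
  finally have "nn_Lp_norm M s (\<lambda>x. \<Sum>i. g i x) = (SUP n. nn_Lp_norm M s (\<lambda>x. \<Sum>i<n. g i x))"
    unfolding nn_Lp_norm_def using s0 by (simp add: ennpowr_SUP)
  also have "\<dots> \<le> (SUP n. \<Sum>i<n. nn_Lp_norm M s (g i))"
    by (intro SUP_mono' nn_Lp_norm_sum_le[OF s]) simp
  finally show ?thesis
    by (simp add: suminf_eq_SUP)
qed

lemma infsum_nat_ennreal_eq_suminf: "(\<Sum>\<^sub>\<infinity>n::nat. h n) = (\<Sum>n. h n :: ennreal)"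
  by (rule sums_unique[OF has_sum_imp_sums[OF has_sum_infsum]]) (simp add: nonneg_summable_on_complete)

lemma infsum_int_ennreal_eq_suminf: "(\<Sum>\<^sub>\<infinity>k::int. h k) = (\<Sum>n. h (int_decode n) :: ennreal)"
  using infsum_reindex_bij_betw[of int_decode UNIV UNIV h] bij_int_decode
  by (simp add: bij_betw_def infsum_nat_ennreal_eq_suminf)

lemma infsum_int_ennreal_eq_nn_integral:
  "(\<Sum>\<^sub>\<infinity>k::int. h k) = (\<integral>\<^sup>+ k. h k \<partial>count_space UNIV)"
  using nn_integral_bij_count_space[OF bij_int_decode, of h]
  by (simp add: infsum_int_ennreal_eq_suminf nn_integral_count_space_nat)

lemma infsum_int_atLeast_ennreal_eq_suminf:
  "(\<Sum>\<^sub>\<infinity>k::int. if j \<le> k then h k else 0) = (\<Sum>m. h (j + int m) :: ennreal)"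
proof -
  have "bij_betw (\<lambda>m. j + int m) UNIV {j..}"
    by (rule bij_betw_byWitness[where f' = "\<lambda>k. nat (k - j)"]) auto
  then have "(\<Sum>\<^sub>\<infinity>k\<in>{j..}. h k) = (\<Sum>\<^sub>\<infinity>m. h (j + int m))"
    by (simp add: infsum_reindex_bij_betw[symmetric])
  moreover have "(\<Sum>\<^sub>\<infinity>k. if j \<le> k then h k else 0) = (\<Sum>\<^sub>\<infinity>k\<in>{j..}. h k)"
    by (rule infsum_cong_neutral) auto
  ultimately show ?thesis
    by (simp add: infsum_nat_ennreal_eq_suminf)
qed

lemma nn_integral_count_space_int_shift:
  "(\<integral>\<^sup>+ j. h (j + c) \<partial>count_space UNIV) = (\<integral>\<^sup>+ j. h j \<partial>count_space (UNIV :: int set))"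
  by (rule nn_integral_bij_count_space) (rule bij_betw_byWitness[where f' = "\<lambda>j. j - c"], auto)

lemma has_sum_single_point: "((\<lambda>k. if k = i then y else 0) has_sum y) UNIV"
  by (rule has_sum_cong_neutral[where T = "{i}", THEN iffD2]) (auto intro: has_sum_finiteI)

lemma ennreal_le_infsum: "h i \<le> (\<Sum>\<^sub>\<infinity>k. h k :: ennreal)"
  using infsum_mono_neutral[of h "{i}" h UNIV] by (simp add: nonneg_summable_on_complete)

lemma ennreal_infsum:
  fixes g :: "'a \<Rightarrow> real"
  assumes "g summable_on A" "\<And>x. x \<in> A \<Longrightarrow> g x \<ge> 0"
  shows "ennreal (infsum g A) = (\<Sum>\<^sub>\<infinity>x\<in>A. ennreal (g x))"
  using assms by (subst infsum_comm_additive_general[where f = ennreal, symmetric])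
    (auto simp: o_def subset_eq sum_nonneg intro!: infsum_cong)

lemma nonneg_summable_on_if_ennreal_infsum_less_top:
  fixes g :: "'a \<Rightarrow> real"
  assumes "\<And>x. g x \<ge> 0" "(\<Sum>\<^sub>\<infinity>x\<in>A. ennreal (g x)) < top"
  shows "g summable_on A"
proof (rule nonneg_bdd_above_summable_on)
  have "sum g F \<le> enn2real (\<Sum>\<^sub>\<infinity>x\<in>A. ennreal (g x))" if "finite F" "F \<subseteq> A" for F
  proof -
    have "ennreal (sum g F) = (\<Sum>\<^sub>\<infinity>x\<in>F. ennreal (g x))"
      using that assms by (simp add: sum_nonneg)
    also have "\<dots> \<le> (\<Sum>\<^sub>\<infinity>x\<in>A. ennreal (g x))"
      using that by (intro infsum_mono_neutral) (auto simp: nonneg_summable_on_complete)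
    finally have "enn2real (ennreal (sum g F)) \<le> enn2real (\<Sum>\<^sub>\<infinity>x\<in>A. ennreal (g x))"
      using assms(2) by (intro enn2real_mono) auto
    then show ?thesis
      using assms(1) by (simp add: sum_nonneg)
  qed
  then show "bdd_above (sum g ` {F. F \<subseteq> A \<and> finite F})"
    by (auto intro!: bdd_aboveI2)
qed (use assms in auto)

lemma summable_on_max_int_encode_powr:
  fixes g :: "int \<Rightarrow> real"
  assumes "p > 0" "\<And>k. g k \<ge> 0" "(\<lambda>k. g k powr p) summable_on UNIV"
  shows "(\<lambda>k. max (g k) ((1 / 2) powr (real (int_encode k) / p)) powr p) summable_on UNIV"
proof -
  have "(\<lambda>n. (1 / 2 :: real) ^ n) summable_on UNIV"
    by (rule summable_nonneg_imp_summable_on) auto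
  then have "(\<lambda>k. (1 / 2 :: real) ^ int_encode k) summable_on UNIV"
    using summable_on_reindex_bij_betw[OF bij_int_decode, of "\<lambda>k. (1 / 2 :: real) ^ int_encode k"] by simp
  then have "(\<lambda>k. g k powr p + (1 / 2) ^ int_encode k) summable_on UNIV"
    using assms(3) by (rule summable_on_add[rotated])
  then have bound: "(\<lambda>k. norm (g k powr p + (1 / 2) ^ int_encode k)) summable_on UNIV"
    by simp
  have "(\<lambda>k. norm (max (g k) ((1 / 2) powr (real (int_encode k) / p)) powr p)) summable_on UNIV"
    by (rule Infinite_Sum.abs_summable_on_comparison_test[OF bound])
      (use assms(1,2) in \<open>auto simp: max_def powr_powr powr_realpow\<close>)
  then show ?thesis
    by simp
qed

section \<open>Geometric smoothing in sequence spaces\<close>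

lemma power_powr: "(x :: real) \<ge> 0 \<Longrightarrow> (x ^ n) powr p = (x powr p) ^ n"
  by (induction n) (simp_all add: powr_mult)

lemma suminf_ennreal_geometric: "0 \<le> \<rho> \<Longrightarrow> \<rho> < 1 \<Longrightarrow> (\<Sum>m. ennreal (\<rho> ^ m)) = ennreal (1 / (1 - \<rho>))"
  by (rule suminf_ennreal_eq) (auto intro: geometric_sums)

lemma powr_add_le_add_powr:
  fixes x y p :: real
  assumes "x \<ge> 0" "y \<ge> 0" "0 < p" "p \<le> 1"
  shows "(x + y) powr p \<le> x powr p + y powr p"
proof (cases "x + y = 0")
  case False
  then have xy: "x + y > 0" using assms by simp
  have "z \<le> z powr p" if "0 \<le> z" "z \<le> 1" for z :: real
    using powr_mono'[OF \<open>p \<le> 1\<close> that] that by simp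
  then have "(x + y) powr p * (x / (x + y) + y / (x + y))
      \<le> (x + y) powr p * ((x / (x + y)) powr p + (y / (x + y)) powr p)"
    using assms xy by (intro mult_left_mono add_mono) auto
  moreover have "x / (x + y) + y / (x + y) = 1"
    using xy by (simp flip: add_divide_distrib)
  moreover have "(x + y) powr p * ((x / (x + y)) powr p + (y / (x + y)) powr p) = x powr p + y powr p"
    using assms xy by (simp add: powr_divide field_simps)
  ultimately show ?thesis
    by simp
qed (use assms in simp)

lemma ennpowr_add_le:
  "0 < p \<Longrightarrow> p \<le> 1 \<Longrightarrow> ennpowr (x + y) p \<le> ennpowr x p + ennpowr y p"
  by (cases x; cases y) (auto simp: ennpowr_ennreal powr_add_le_add_powr simp flip: ennreal_plus)

lemma ennpowr_suminf_le:
  fixes x :: "nat \<Rightarrow> ennreal"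
  assumes p: "0 < p" "p \<le> 1"
  shows "ennpowr (\<Sum>m. x m) p \<le> (\<Sum>m. ennpowr (x m) p)"
proof -
  have "ennpowr (\<Sum>m<n. x m) p \<le> (\<Sum>m<n. ennpowr (x m) p)" for n
  proof (induction n)
    case (Suc n)
    then show ?case
      using ennpowr_add_le[OF p, of "\<Sum>m<n. x m" "x n"] by (simp add: add_right_mono order_trans)
  qed simp
  then have "(SUP n. ennpowr (\<Sum>m<n. x m) p) \<le> (SUP n. \<Sum>m<n. ennpowr (x m) p)"
    by (rule SUP_mono')
  then show ?thesis
    by (simp add: suminf_eq_SUP ennpowr_SUP[OF p(1)])
qed

lemma geometric_tail_sum_lp_finite:
  fixes a :: "int \<Rightarrow> ennreal" and \<rho> p :: real
  assumes p: "p > 0" and \<rho>: "0 \<le> \<rho>" "\<rho> < 1"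
    and fin: "(\<integral>\<^sup>+ k. ennpowr (a k) p \<partial>count_space UNIV) < top"
  shows "(\<integral>\<^sup>+ j. ennpowr (\<Sum>m. ennreal (\<rho> ^ m) * a (j + int m)) p \<partial>count_space UNIV) < top"
proof (cases "p \<ge> 1")
  case True
  let ?N = "nn_Lp_norm (count_space UNIV) p"
  have "?N (\<lambda>j. \<Sum>m. ennreal (\<rho> ^ m) * a (j + int m)) \<le> (\<Sum>m. ?N (\<lambda>j. ennreal (\<rho> ^ m) * a (j + int m)))"
    by (rule nn_Lp_norm_suminf_le[OF True]) simp
  also have "\<dots> = (\<Sum>m. ennreal (\<rho> ^ m)) * ?N a"
    using p nn_integral_count_space_int_shift[of "\<lambda>k. ennpowr (a k) p"]
    by (simp add: nn_Lp_norm_cmult) (simp add: nn_Lp_norm_def)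
  also have "\<dots> < top"
    using fin p \<rho> by (simp add: suminf_ennreal_geometric nn_Lp_norm_def ennpowr_less_top_iff ennreal_mult_less_top)
  finally show ?thesis
    using p by (simp add: nn_Lp_norm_def ennpowr_less_top_iff)
next
  case False
  have "(\<integral>\<^sup>+ j. ennpowr (\<Sum>m. ennreal (\<rho> ^ m) * a (j + int m)) p \<partial>count_space UNIV)
      \<le> (\<integral>\<^sup>+ j. (\<Sum>m. ennpowr (ennreal (\<rho> ^ m) * a (j + int m)) p) \<partial>count_space UNIV)"
    using False p by (intro nn_integral_mono ennpowr_suminf_le) auto
  also have "\<dots> = (\<Sum>m. ennreal ((\<rho> powr p) ^ m)) * (\<integral>\<^sup>+ k. ennpowr (a k) p \<partial>count_space UNIV)"
    using p \<rho> by (simp add: nn_integral_suminf ennpowr_mult ennpowr_ennreal nn_integral_cmult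
        nn_integral_count_space_int_shift[of "\<lambda>k. ennpowr (a k) p"] power_powr)
  also have "\<dots> < top"
    using fin p \<rho> powr_less_mono2[OF p, of \<rho> 1]
    by (simp add: suminf_ennreal_geometric ennreal_mult_less_top)
  finally show ?thesis .
qed

section \<open>Local averages and the slice norm\<close>

lemma sigma_finite_lebesgue: "sigma_finite_measure (lebesgue :: 'a::euclidean_space measure)"
proof -
  obtain A :: "'a set set" where "countable A" "A \<subseteq> sets lborel" "\<Union>A = space lborel"
    "\<forall>a\<in>A. emeasure lborel a \<noteq> \<infinity>"
    using lborel.sigma_finite_countable by blast
  then show ?thesis
    unfolding sigma_finite_measure_def by (intro exI[of _ A]) (auto simp: emeasure_completion)
qed

lemma borel_measurable_nn_integral_ball:
  fixes g :: "'a::euclidean_space \<Rightarrow> ennreal"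
  assumes [measurable]: "g \<in> borel_measurable lebesgue"
  shows "(\<lambda>x. \<integral>\<^sup>+ y. indicator (ball x t) y * g y \<partial>lebesgue) \<in> borel_measurable lebesgue"
proof -
  interpret sigma_finite_measure "lebesgue :: 'a measure"
    by (rule sigma_finite_lebesgue)
  have [measurable]: "(\<lambda>x::'a. x) \<in> measurable lebesgue borel"
    by (simp add: measurable_completion)
  have "(\<lambda>z::'a \<times> 'a. indicator (ball (fst z) t) (snd z) * g (snd z)) \<in> borel_measurable (lebesgue \<Otimes>\<^sub>M lebesgue)"
    unfolding indicator_def mem_ball by measurable
  then show ?thesis
    by (intro borel_measurable_nn_integral) (simp add: case_prod_beta')
qed

lemma measure_lebesgue_ball_translate:
  fixes x :: "'a::euclidean_space"
  shows "t \<ge> 0 \<Longrightarrow> measure lebesgue (ball x t) = measure lebesgue (ball (0::'a) t)"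
  using emeasure_lebesgue_ball_conv_unit_ball[of t x] emeasure_lebesgue_ball_conv_unit_ball[of t "0::'a"]
  by (simp add: measure_def)

lemma loc_avg_nn_integral:
  fixes f :: "'a::euclidean_space \<Rightarrow> real"
  assumes "t \<ge> 0"
  shows "loc_avg t r f x = ennpowr (ennreal (1 / measure lebesgue (ball (0::'a) t)) *
    (\<integral>\<^sup>+ y. indicator (ball x t) y * ennreal (\<bar>f y\<bar> powr r) \<partial>lebesgue)) (1 / r)"
  unfolding loc_avg_def measure_lebesgue_ball_translate[OF assms, of x]
  by (simp add: indicator_mult_ennreal mult.commute)

lemma borel_measurable_loc_avg [measurable]:
  assumes "t \<ge> 0" and [measurable]: "u \<in> borel_measurable lebesgue"
  shows "loc_avg t r u \<in> borel_measurable lebesgue"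
proof -
  have "(\<lambda>x. \<integral>\<^sup>+ y. indicator (ball x t) y * ennreal (\<bar>u y\<bar> powr r) \<partial>lebesgue) \<in> borel_measurable lebesgue"
    by (rule borel_measurable_nn_integral_ball) measurable
  then show ?thesis
    unfolding loc_avg_nn_integral[OF assms(1), abs_def] by measurable
qed

definition ball_average_measure :: "real \<Rightarrow> 'a::euclidean_space \<Rightarrow> 'a measure" where
  "ball_average_measure t x =
     density lebesgue (\<lambda>y. ennreal (1 / measure lebesgue (ball x t)) * indicator (ball x t) y)"

lemma sets_ball_average_measure [measurable_cong]: "sets (ball_average_measure t x) = sets lebesgue"
  by (simp add: ball_average_measure_def)

lemma loc_avg_eq_nn_Lp_norm:
  assumes "r > 0" and [measurable]: "f \<in> borel_measurable lebesgue"
  shows "loc_avg t r f x = nn_Lp_norm (ball_average_measure t x) r (\<lambda>y. ennreal \<bar>f y\<bar>)"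
proof -
  have [measurable]: "ball x t \<in> sets lebesgue"
    by simp
  have "(\<integral>\<^sup>+ y. ennpowr (ennreal \<bar>f y\<bar>) r \<partial>ball_average_measure t x)
      = ennreal (1 / measure lebesgue (ball x t)) *
        (\<integral>\<^sup>+ y. ennreal (indicator (ball x t) y * \<bar>f y\<bar> powr r) \<partial>lebesgue)"
    unfolding ball_average_measure_def
    by (simp add: nn_integral_density nn_integral_cmult ennpowr_ennreal mult.assoc
        indicator_mult_ennreal)
  then show ?thesis
    by (simp add: loc_avg_def nn_Lp_norm_def)
qed

lemma slice_norm_eq_nn_Lp_norm: "slice_norm t r q f = nn_Lp_norm lebesgue q (loc_avg t r f)"
  by (simp add: slice_norm_def nn_Lp_norm_def)

lemma slice_norm_mono:
  assumes "\<And>y. \<bar>F y\<bar> \<le> \<bar>G y\<bar>" "r > 0" "q > 0"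
  shows "slice_norm t r q F \<le> slice_norm t r q G"
proof -
  have "loc_avg t r F x \<le> loc_avg t r G x" for x
    unfolding loc_avg_def using assms
    by (intro ennpowr_mono mult_left_mono nn_integral_mono ennreal_leI mult_left_mono powr_mono2) auto
  then show ?thesis
    unfolding slice_norm_def using assms by (intro ennpowr_mono nn_integral_mono) auto
qed

lemma slice_norm_zero: "slice_norm t r q (\<lambda>_. 0) = 0"
  by (simp add: slice_norm_def loc_avg_def)

lemma slice_norm_cong_AE:
  assumes "AE y in lebesgue. F y = G y"
  shows "slice_norm t r q F = slice_norm t r q G"
proof -
  have "(\<integral>\<^sup>+ y. ennreal (indicator (ball x t) y * \<bar>F y\<bar> powr r) \<partial>lebesgue)
      = (\<integral>\<^sup>+ y. ennreal (indicator (ball x t) y * \<bar>G y\<bar> powr r) \<partial>lebesgue)" for x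
    using assms by (intro nn_integral_cong_AE) auto
  then show ?thesis
    by (simp add: slice_norm_def loc_avg_def)
qed

lemma slice_norm_cmult:
  assumes "t > 0" "r > 0" "q > 0" and [measurable]: "u \<in> borel_measurable lebesgue"
  shows "slice_norm t r q (\<lambda>y. c * u y) = ennreal \<bar>c\<bar> * slice_norm t r q u"
proof -
  have "loc_avg t r (\<lambda>y. c * u y) x = ennreal \<bar>c\<bar> * loc_avg t r u x" for x
    using assms nn_Lp_norm_cmult[of r "\<lambda>y. ennreal \<bar>u y\<bar>" "ball_average_measure t x" "ennreal \<bar>c\<bar>"]
    by (simp add: loc_avg_eq_nn_Lp_norm abs_mult ennreal_mult)
  then have "loc_avg t r (\<lambda>y. c * u y) = (\<lambda>x. ennreal \<bar>c\<bar> * loc_avg t r u x)"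
    by (rule ext)
  then show ?thesis
    using assms by (simp add: slice_norm_eq_nn_Lp_norm nn_Lp_norm_cmult)
qed

lemma slice_norm_suminf_le:
  fixes u :: "nat \<Rightarrow> 'a::euclidean_space \<Rightarrow> real"
  assumes t: "t > 0" and r: "r \<ge> 1" and q: "q \<ge> 1"
    and [measurable]: "F \<in> borel_measurable lebesgue" "\<And>n. u n \<in> borel_measurable lebesgue"
    and F_le: "\<And>y. ennreal \<bar>F y\<bar> \<le> (\<Sum>n. ennreal \<bar>u n y\<bar>)"
  shows "slice_norm t r q F \<le> (\<Sum>n. slice_norm t r q (u n))"
proof -
  have r0: "r > 0" using r by simp
  have "loc_avg t r F x \<le> (\<Sum>n. loc_avg t r (u n) x)" for x
  proof -
    have "loc_avg t r F x \<le> nn_Lp_norm (ball_average_measure t x) r (\<lambda>y. \<Sum>n. ennreal \<bar>u n y\<bar>)"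
      unfolding loc_avg_eq_nn_Lp_norm[OF r0 assms(4)] using r0 by (intro nn_Lp_norm_mono F_le)
    also have "\<dots> \<le> (\<Sum>n. loc_avg t r (u n) x)"
      unfolding loc_avg_eq_nn_Lp_norm[OF r0 assms(5)] using r by (intro nn_Lp_norm_suminf_le) auto
    finally show ?thesis .
  qed
  then have "slice_norm t r q F \<le> nn_Lp_norm lebesgue q (\<lambda>x. \<Sum>n. loc_avg t r (u n) x)"
    unfolding slice_norm_eq_nn_Lp_norm using q by (intro nn_Lp_norm_mono) auto
  also have "\<dots> \<le> (\<Sum>n. slice_norm t r q (u n))"
    unfolding slice_norm_eq_nn_Lp_norm using t q by (intro nn_Lp_norm_suminf_le) auto
  finally show ?thesis .
qed

lemma slice_norm_has_sum_le:
  fixes u :: "int \<Rightarrow> 'a::euclidean_space \<Rightarrow> real"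
  assumes "t > 0" "r \<ge> 1" "q \<ge> 1"
    and [measurable]: "F \<in> borel_measurable lebesgue" "\<And>k. u k \<in> borel_measurable lebesgue"
    and has_sum: "\<And>y. ((\<lambda>k. u k y) has_sum F y) UNIV"
  shows "slice_norm t r q F \<le> (\<Sum>\<^sub>\<infinity>k. slice_norm t r q (u k))"
proof -
  have "ennreal \<bar>F y\<bar> \<le> (\<Sum>n. ennreal \<bar>u (int_decode n) y\<bar>)" for y
  proof -
    have abs_summable: "(\<lambda>k. \<bar>u k y\<bar>) summable_on UNIV"
      using summable_on_iff_abs_summable_on_real[THEN iffD1, OF has_sum_imp_summable[OF has_sum]]
      by simp
    have "\<bar>F y\<bar> \<le> (\<Sum>\<^sub>\<infinity>k. \<bar>u k y\<bar>)"
      using norm_infsum_bound[of "\<lambda>k. u k y" UNIV] has_sum[of y] abs_summable by (simp add: infsumI)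
    then have "ennreal \<bar>F y\<bar> \<le> ennreal (\<Sum>\<^sub>\<infinity>k. \<bar>u k y\<bar>)"
      by (rule ennreal_leI)
    also have "\<dots> = (\<Sum>\<^sub>\<infinity>k. ennreal \<bar>u k y\<bar>)"
      using abs_summable by (rule ennreal_infsum) simp
    finally show ?thesis
      unfolding infsum_int_ennreal_eq_suminf .
  qed
  moreover have "u (int_decode n) \<in> borel_measurable lebesgue" for n
    by simp
  ultimately have "slice_norm t r q F \<le> (\<Sum>n. slice_norm t r q (u (int_decode n)))"
    by (intro slice_norm_suminf_le[OF assms(1-4)])
  then show ?thesis
    unfolding infsum_int_ennreal_eq_suminf .
qed

lemma Bk_eq_cball: "Bk k = cball 0 (2 powr real_of_int k)"
  by (auto simp: Bk_def)

lemma sets_Bk [measurable]: "Bk k \<in> sets lebesgue"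
  by (simp add: Bk_eq_cball)

lemma sets_Sk [measurable]: "Sk k \<in> sets lebesgue"
  by (simp add: Sk_def)

lemma Bk_Int_Sk_eq_empty: "k < j \<Longrightarrow> Bk k \<inter> Sk j = {}"
  by (auto simp: Sk_def Bk_def dest: order.trans[OF _ powr_mono[of "real_of_int k" "real_of_int (j - 1)" 2]])

lemma mem_Sk_iff: "x \<in> Sk k \<longleftrightarrow> x \<noteq> 0 \<and> k = \<lceil>log 2 (norm x)\<rceil>"
proof (cases "x = 0")
  case False
  then have "x \<in> Sk k \<longleftrightarrow> real_of_int k - 1 < log 2 (norm x) \<and> log 2 (norm x) \<le> real_of_int k"
    by (auto simp: Sk_def Bk_def less_log_iff log_le_iff not_le)
  then show ?thesis
    using False by (simp add: ceiling_eq_iff eq_commute[of k])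
qed (simp add: Sk_def Bk_def)

text \<open>The origin lies in no annulus \<open>Sk k\<close>; it is put into shell \<open>0\<close>.\<close>

definition dyadic_shell_index :: "'a::euclidean_space \<Rightarrow> int" where
  "dyadic_shell_index x = (if x = 0 then 0 else \<lceil>log 2 (norm x)\<rceil>)"

lemma dyadic_shell_index_eq_iff: "x \<noteq> 0 \<Longrightarrow> dyadic_shell_index x = k \<longleftrightarrow> x \<in> Sk k"
  by (auto simp: dyadic_shell_index_def mem_Sk_iff)

lemma dyadic_shell_index_eq_imp_Bk: "dyadic_shell_index x = k \<Longrightarrow> x \<in> Bk k"
  by (cases "x = 0") (auto simp: Bk_def dyadic_shell_index_eq_iff Sk_def)

lemma measurable_dyadic_shell_index [measurable]:
  "dyadic_shell_index \<in> lebesgue \<rightarrow>\<^sub>M count_space (UNIV :: int set)"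
proof -
  have "dyadic_shell_index -` {k} \<in> sets lebesgue" for k
  proof -
    have eq: "dyadic_shell_index -` {k} = Sk k \<union> (if k = 0 then cball 0 0 else {})"
      by (auto simp: dyadic_shell_index_def mem_Sk_iff split: if_splits)
    have "cball (0::'a) 0 \<in> sets lebesgue"
      by (intro fmeasurableD lmeasurable_cball)
    then show ?thesis
      unfolding eq by (intro sets.Un) auto
  qed
  then show ?thesis
    by (intro measurable_count_space_eq2_countable[THEN iffD2]) auto
qed

section \<open>Sums of dyadic central blocks\<close>

lemma slice_norm_block_on_Sk_le:
  assumes "t > 0" "r > 0" "q > 0" and block: "dyadic_central_block C \<alpha> q r t k b"
  shows "slice_norm t r q (\<lambda>x. c * b x * indicator (Sk j) x)
    \<le> (if j \<le> k then ennreal (\<bar>c\<bar> * C * 2 powr (- real_of_int k * \<alpha>)) else 0)"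
proof (cases "j \<le> k")
  case True
  have [measurable]: "b \<in> borel_measurable lebesgue"
    using block by (simp add: dyadic_central_block_def)
  have "slice_norm t r q (\<lambda>x. c * b x * indicator (Sk j) x)
      = ennreal \<bar>c\<bar> * slice_norm t r q (\<lambda>x. b x * indicator (Sk j) x)"
    using assms by (simp add: slice_norm_cmult mult.assoc)
  also have "\<dots> \<le> ennreal \<bar>c\<bar> * slice_norm t r q b"
    using assms by (intro mult_left_mono slice_norm_mono) (auto simp: abs_mult split: split_indicator)
  also have "\<dots> \<le> ennreal \<bar>c\<bar> * ennreal (C * (2 powr real_of_int k) powr (- \<alpha>))"
    using block by (intro mult_left_mono) (auto simp: dyadic_central_block_def)
  also have "\<dots> = ennreal (\<bar>c\<bar> * C * 2 powr (- real_of_int k * \<alpha>))"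
    by (simp add: powr_powr mult.assoc flip: ennreal_mult')
  finally show ?thesis
    using True by simp
next
  case False
  then have "c * b x * indicator (Sk j) x = 0" for x
    using block Bk_Int_Sk_eq_empty[of k j] by (auto simp: dyadic_central_block_def split: split_indicator)
  then have "(\<lambda>x. c * b x * indicator (Sk j) x) = (\<lambda>_. 0)"
    by (rule ext)
  then show ?thesis
    using False slice_norm_zero by simp
qed

lemma slice_norm_Sk_le_block_tail:
  fixes f :: "'a::euclidean_space \<Rightarrow> real" and lam :: "int \<Rightarrow> real" and b :: "int \<Rightarrow> 'a \<Rightarrow> real"
  assumes "t > 0" "r \<ge> 1" "q \<ge> 1" and [measurable]: "f \<in> borel_measurable lebesgue"
    and blocks: "\<And>k. dyadic_central_block C \<alpha> q r t k (b k)"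
    and has_sum: "\<And>x. ((\<lambda>k. lam k * b k x) has_sum f x) UNIV"
  shows "slice_norm t r q (\<lambda>x. f x * indicator (Sk j) x)
    \<le> (\<Sum>m. ennreal (\<bar>lam (j + int m)\<bar> * C * 2 powr (- real_of_int (j + int m) * \<alpha>)))"
proof -
  have [measurable]: "b k \<in> borel_measurable lebesgue" for k
    using blocks by (simp add: dyadic_central_block_def)
  have "slice_norm t r q (\<lambda>x. f x * indicator (Sk j) x)
      \<le> (\<Sum>\<^sub>\<infinity>k. slice_norm t r q (\<lambda>x. lam k * b k x * indicator (Sk j) x))"
    using assms by (intro slice_norm_has_sum_le has_sum_cmult_left) auto
  also have "\<dots> \<le> (\<Sum>\<^sub>\<infinity>k. if j \<le> k then ennreal (\<bar>lam k\<bar> * C * 2 powr (- real_of_int k * \<alpha>)) else 0)"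
    using assms by (intro infsum_mono nonneg_summable_on_complete slice_norm_block_on_Sk_le) auto
  finally show ?thesis
    by (simp only: infsum_int_atLeast_ennreal_eq_suminf)
qed

lemma scaled_slice_norm_Sk_le_geometric_tail:
  fixes f :: "'a::euclidean_space \<Rightarrow> real" and lam :: "int \<Rightarrow> real" and b :: "int \<Rightarrow> 'a \<Rightarrow> real"
  assumes "t > 0" "r \<ge> 1" "q \<ge> 1" and [measurable]: "f \<in> borel_measurable lebesgue"
    and blocks: "\<And>k. dyadic_central_block C \<alpha> q r t k (b k)"
    and has_sum: "\<And>x. ((\<lambda>k. lam k * b k x) has_sum f x) UNIV"
  shows "ennreal (2 powr (real_of_int j * \<alpha>)) * slice_norm t r q (\<lambda>x. f x * indicator (Sk j) x)
    \<le> (\<Sum>m. ennreal ((2 powr (- \<alpha>)) ^ m) * ennreal (\<bar>lam (j + int m)\<bar> * C))"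
proof -
  have scale: "ennreal (2 powr (real_of_int j * \<alpha>)) * ennreal (\<bar>lam (j + int m)\<bar> * C * 2 powr (- real_of_int (j + int m) * \<alpha>))
      = ennreal ((2 powr (- \<alpha>)) ^ m) * ennreal (\<bar>lam (j + int m)\<bar> * C)" for m
  proof -
    have "real_of_int j * \<alpha> + - real_of_int (j + int m) * \<alpha> = real m * (- \<alpha>)"
      by (simp add: algebra_simps)
    then have "2 powr (real_of_int j * \<alpha>) * 2 powr (- real_of_int (j + int m) * \<alpha>) = (2 powr (- \<alpha>)) ^ m"
      by (simp add: powr_power flip: powr_add)
    then have "2 powr (real_of_int j * \<alpha>) * (\<bar>lam (j + int m)\<bar> * C * 2 powr (- real_of_int (j + int m) * \<alpha>))
        = (2 powr (- \<alpha>)) ^ m * (\<bar>lam (j + int m)\<bar> * C)"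
      by (metis mult.commute mult.left_commute)
    then show ?thesis
      by (metis ennreal_mult' powr_ge_zero zero_le_power)
  qed
  have "ennreal (2 powr (real_of_int j * \<alpha>)) * slice_norm t r q (\<lambda>x. f x * indicator (Sk j) x)
      \<le> ennreal (2 powr (real_of_int j * \<alpha>)) *
        (\<Sum>m. ennreal (\<bar>lam (j + int m)\<bar> * C * 2 powr (- real_of_int (j + int m) * \<alpha>)))"
    by (intro mult_left_mono slice_norm_Sk_le_block_tail[OF assms]) simp
  also have "\<dots> = (\<Sum>m. ennreal ((2 powr (- \<alpha>)) ^ m) * ennreal (\<bar>lam (j + int m)\<bar> * C))"
    by (simp only: ennreal_suminf_cmult[symmetric] scale)
  finally show ?thesis .
qed

lemma herz_slice_normp_less_top_if_block_sum:
  fixes f :: "'a::euclidean_space \<Rightarrow> real" and lam :: "int \<Rightarrow> real" and b :: "int \<Rightarrow> 'a \<Rightarrow> real"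
  assumes "\<alpha> > 0" "t > 0" "p > 0" "r \<ge> 1" "q \<ge> 1" "C \<ge> 0" and [measurable]: "f \<in> borel_measurable lebesgue"
    and summable: "(\<lambda>k. \<bar>lam k\<bar> powr p) summable_on UNIV"
    and blocks: "\<And>k. dyadic_central_block C \<alpha> q r t k (b k)"
    and has_sum: "\<And>x. ((\<lambda>k. lam k * b k x) has_sum f x) UNIV"
  shows "herz_slice_normp \<alpha> p q r t f < top"
proof -
  define a where "a k = ennreal (\<bar>lam k\<bar> * C)" for k
  have \<rho>: "0 \<le> 2 powr (- \<alpha>)" "2 powr (- \<alpha>) < 1"
    using \<open>\<alpha> > 0\<close> by (auto simp: powr_less_one)
  have "ennreal (2 powr (real_of_int j * \<alpha> * p)) * ennpowr (slice_norm t r q (\<lambda>x. f x * indicator (Sk j) x)) p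
      \<le> ennpowr (\<Sum>m. ennreal ((2 powr (- \<alpha>)) ^ m) * a (j + int m)) p" for j
    using ennpowr_mono[OF _ scaled_slice_norm_Sk_le_geometric_tail[OF assms(2,4,5,7) blocks has_sum], of p j] \<open>p > 0\<close>
    by (simp add: a_def ennpowr_mult ennpowr_ennreal powr_powr)
  then have "herz_slice_normp \<alpha> p q r t f
      \<le> (\<integral>\<^sup>+ j. ennpowr (\<Sum>m. ennreal ((2 powr (- \<alpha>)) ^ m) * a (j + int m)) p \<partial>count_space UNIV)"
    unfolding herz_slice_normp_def infsum_int_ennreal_eq_nn_integral by (intro nn_integral_mono) simp
  also have "\<dots> < top"
  proof (rule geometric_tail_sum_lp_finite[OF \<open>p > 0\<close> \<rho>])
    have "ennpowr (a k) p = ennreal (C powr p) * ennreal (\<bar>lam k\<bar> powr p)" for k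
      using \<open>C \<ge> 0\<close> by (simp add: a_def ennpowr_ennreal powr_mult mult.commute flip: ennreal_mult)
    then have "(\<integral>\<^sup>+ k. ennpowr (a k) p \<partial>count_space UNIV) = ennreal (C powr p) * (\<Sum>\<^sub>\<infinity>k. ennreal (\<bar>lam k\<bar> powr p))"
      by (simp add: infsum_int_ennreal_eq_nn_integral nn_integral_cmult)
    then show "(\<integral>\<^sup>+ k. ennpowr (a k) p \<partial>count_space UNIV) < top"
      using summable by (simp add: ennreal_infsum[symmetric] ennreal_mult_less_top)
  qed
  finally show ?thesis .
qed

section \<open>Decomposition into dyadic central blocks\<close>

lemma dyadic_central_block_shell_restriction:
  fixes f :: "'a::euclidean_space \<Rightarrow> real"
  assumes "t > 0" "r > 0" "q > 0" "c > 0" and [measurable]: "f \<in> borel_measurable lebesgue"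
    and annulus: "slice_norm t r q (\<lambda>x. f x * indicator (Sk k) x) \<le> ennreal (c * (C * (2 powr real_of_int k) powr (- \<alpha>)))"
  shows "dyadic_central_block C \<alpha> q r t k (\<lambda>x. if dyadic_shell_index x = k then f x / c else 0)"
proof -
  have "AE x in lebesgue. (if dyadic_shell_index x = k then f x / c else 0) = inverse c * (f x * indicator (Sk k) x)"
    using AE_completion[OF AE_lborel_singleton[of 0]]
    by eventually_elim (auto simp: dyadic_shell_index_eq_iff divide_inverse split: split_indicator)
  then have "slice_norm t r q (\<lambda>x. if dyadic_shell_index x = k then f x / c else 0)
      = ennreal (inverse c) * slice_norm t r q (\<lambda>x. f x * indicator (Sk k) x)"
    using assms by (simp add: slice_norm_cong_AE slice_norm_cmult)
  also have "\<dots> \<le> ennreal (inverse c) * ennreal (c * (C * (2 powr real_of_int k) powr (- \<alpha>)))"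
    using annulus by (rule mult_left_mono) simp
  also have "\<dots> = ennreal (C * (2 powr real_of_int k) powr (- \<alpha>))"
    using \<open>c > 0\<close> by (simp add: field_simps flip: ennreal_mult')
  finally show ?thesis
    by (auto simp: dyadic_central_block_def dyadic_shell_index_eq_imp_Bk)
qed

lemma herz_slice_normp_less_top_imp_annulus_norms:
  fixes f :: "'a::euclidean_space \<Rightarrow> real"
  assumes "p > 0" and herz: "herz_slice_normp \<alpha> p q r t f < top"
  obtains \<nu> :: "int \<Rightarrow> real"
  where "\<And>k. \<nu> k \<ge> 0" "\<And>k. slice_norm t r q (\<lambda>x. f x * indicator (Sk k) x) = ennreal (\<nu> k)"
    and "(\<lambda>k. (2 powr (real_of_int k * \<alpha>) * \<nu> k) powr p) summable_on UNIV"
proof -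
  define N where "N k = slice_norm t r q (\<lambda>x. f x * indicator (Sk k) x)" for k
  define w where "w k = 2 powr (real_of_int k * \<alpha>)" for k
  have herz_eq: "herz_slice_normp \<alpha> p q r t f = (\<Sum>\<^sub>\<infinity>k. ennpowr (ennreal (w k) * N k) p)"
    using \<open>p > 0\<close> by (simp add: herz_slice_normp_def N_def w_def ennpowr_mult ennpowr_ennreal powr_powr)
  have "N k < top" for k
    using le_less_trans[OF ennreal_le_infsum herz[unfolded herz_eq]] \<open>p > 0\<close>
    by (cases "N k = 0") (auto simp: w_def ennreal_mult_less_top ennpowr_less_top_iff)
  then have N_eq: "N k = ennreal (enn2real (N k))" for k
    by simp
  have "(\<Sum>\<^sub>\<infinity>k. ennreal ((w k * enn2real (N k)) powr p)) = herz_slice_normp \<alpha> p q r t f"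
    unfolding herz_eq by (subst (2) N_eq) (simp add: w_def ennpowr_ennreal flip: ennreal_mult')
  then have "(\<lambda>k. (w k * enn2real (N k)) powr p) summable_on UNIV"
    using herz by (intro nonneg_summable_on_if_ennreal_infsum_less_top) auto
  then show ?thesis
    using N_eq by (intro that[of "\<lambda>k. enn2real (N k)"]) (auto simp: N_def w_def)
qed

lemma block_decomposition_if_herz_slice_normp_less_top:
  fixes f :: "'a::euclidean_space \<Rightarrow> real"
  assumes "t > 0" "p > 0" "r > 0" "q > 0" "C > 0" and [measurable]: "f \<in> borel_measurable lebesgue"
    and herz: "herz_slice_normp \<alpha> p q r t f < top"
  shows "\<exists>(lam::int \<Rightarrow> real) (b::int \<Rightarrow> 'a \<Rightarrow> real).
    (\<lambda>k. \<bar>lam k\<bar> powr p) summable_on UNIV \<and>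
    (\<forall>k. dyadic_central_block C \<alpha> q r t k (b k)) \<and>
    (\<forall>x. ((\<lambda>k. lam k * b k x) has_sum f x) UNIV)"
proof -
  obtain \<nu> where \<nu>_nonneg: "\<And>k. \<nu> k \<ge> 0"
    and N_eq: "\<And>k. slice_norm t r q (\<lambda>x. f x * indicator (Sk k) x) = ennreal (\<nu> k)"
    and summable: "(\<lambda>k. (2 powr (real_of_int k * \<alpha>) * \<nu> k) powr p) summable_on UNIV"
    using herz_slice_normp_less_top_imp_annulus_norms[OF \<open>p > 0\<close> herz] by blast
  text \<open>The second term keeps every coefficient positive, so that \<open>f\<close> is recovered at every point,
    also where \<open>\<nu> k = 0\<close>.\<close>
  define lam where "lam k = max (2 powr (real_of_int k * \<alpha>) * \<nu> k / C) ((1 / 2) powr (real (int_encode k) / p))" for k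
  define b where "b k x = (if dyadic_shell_index x = k then f x / lam k else 0)" for k x
  have lam_pos: "lam k > 0" for k
    by (simp add: lam_def max.strict_coboundedI2)
  have "dyadic_central_block C \<alpha> q r t k (b k)" for k
    unfolding b_def
  proof (rule dyadic_central_block_shell_restriction[OF assms(1,3,4) lam_pos assms(6)])
    have "2 powr (real_of_int k * \<alpha>) * \<nu> k / C \<le> lam k"
      by (simp add: lam_def)
    then have "\<nu> k \<le> lam k * C / 2 powr (real_of_int k * \<alpha>)"
      using \<open>C > 0\<close> by (simp add: field_simps)
    also have "\<dots> = lam k * (C * (2 powr real_of_int k) powr (- \<alpha>))"
      by (simp add: powr_powr powr_minus divide_inverse)
    finally show "slice_norm t r q (\<lambda>x. f x * indicator (Sk k) x) \<le> ennreal (lam k * (C * (2 powr real_of_int k) powr (- \<alpha>)))"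
      by (simp add: N_eq ennreal_leI)
  qed
  moreover have "((\<lambda>k. lam k * b k x) has_sum f x) UNIV" for x
  proof -
    have "lam k * b k x = (if k = dyadic_shell_index x then f x else 0)" for k
      using lam_pos[of k] by (auto simp: b_def)
    with has_sum_single_point[of "dyadic_shell_index x" "f x"] show ?thesis
      by simp
  qed
  moreover have "(\<lambda>k. \<bar>lam k\<bar> powr p) summable_on UNIV"
  proof -
    have "(\<lambda>k. (2 powr (real_of_int k * \<alpha>) * \<nu> k / C) powr p) summable_on UNIV"
      using summable_on_cmult_right[OF summable, of "C powr (- p)"] \<open>C > 0\<close> \<nu>_nonneg
      by (simp add: powr_divide powr_mult powr_minus divide_inverse inverse_powr mult.commute)
    then show ?thesis
      using \<open>p > 0\<close> \<open>C > 0\<close> \<nu>_nonneg lam_pos by (simp add: lam_def abs_of_pos summable_on_max_int_encode_powr)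
  qed
  ultimately show ?thesis
    by blast
qed

theorem theorem4p1:
  fixes f :: "'a::euclidean_space \<Rightarrow> real"
    and \<alpha> t p r q C :: real
  assumes "\<alpha> > 0" "t > 0" "p > 0" "r > 1" "q \<ge> 1" "C > 0"
    and "f \<in> borel_measurable lebesgue"
  shows "f \<in> herz_slice_space \<alpha> p q r t \<longleftrightarrow>
    (\<exists>(lam::int \<Rightarrow> real) (b::int \<Rightarrow> 'a \<Rightarrow> real).
       (\<lambda>k. \<bar>lam k\<bar> powr p) summable_on UNIV \<and>
       (\<forall>k. dyadic_central_block C \<alpha> q r t k (b k)) \<and>
       (\<forall>x. ((\<lambda>k. lam k * b k x) has_sum f x) UNIV))"
proof -
  have "herz_slice_normp \<alpha> p q r t f < top"
    if "(\<lambda>k. \<bar>lam k\<bar> powr p) summable_on UNIV" "\<forall>k. dyadic_central_block C \<alpha> q r t k (b k)"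
      "\<forall>x. ((\<lambda>k. lam k * b k x) has_sum f x) UNIV" for lam b
    using assms that by (intro herz_slice_normp_less_top_if_block_sum[where lam = lam and b = b and C = C]) auto
  then show ?thesis
    using block_decomposition_if_herz_slice_normp_less_top[of t p r q C f \<alpha>] assms
    by (auto simp: herz_slice_space_def)
qed

end
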